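(* Let $\mathbb X,\mathbb Y$ be Euclidean spaces, $\Phi\colon\mathbb X\rightrightarrows\mathbb Y$ with closed graph, $(\bar x,\bar y)\in\operatorname{gph}\Phi$, $u\in\mathbb S_{\mathbb X}$. If $\Phi$ is quasi-normal in direction $u$ at $(\bar x,\bar y)$ with respect to some orthonormal basis $\mathcal E=\{e_1,\dots,e_m\}$ of $\mathbb Y$, then $\Phi$ is strongly asymptotically regular at $(\bar x,\bar y)$ in direction $u$ and metrically subregular at $(\bar x,\bar y)$ in direction $u$.
   Context: $\widehat D^*\Phi(x,y)(y^* )=\{x^*\mid(x^*,-y^* )\in\widehat{\mathcal N}_{\operatorname{gph}\Phi}(x,y)\}$ (regular coderivative); $D^*\Phi((\bar x,\bar y);(u,v))(y^* )=\{x^*\mid(x^*,-y^* )\in\mathcal N_{\operatorname{gph}\Phi}((\bar x,\bar y);(u,v))\}$ with the directional limiting normal cone ($\eta\in\mathcal N_Q(z;w)$ iff there are $w_k\to w$, $t_k\downarrow0$, $\eta_k\to\eta$, $\eta_k\in\widehat{\mathcal N}_Q(z+t_kw_k)$); $\ker\Psi=\{y^*\mid0\in\Psi(y^* )\}$, $\operatorname{Im}\Psi=\bigcup\Psi(y^* )$. Quasi-normality in direction $u$ w.r.t. $\mathcal E$: there is no nonzero $\lambda\in\ker D^*\Phi((\bar x,\bar y);(u,0))$ for which there exist $(x_k,y_k)\in\operatorname{gph}\Phi$ with $x_k\ne\bar x$, $\lambda_k\in\mathbb Y$, $\eta_k\in\mathbb X$ such that $x_k\to\bar x$, $y_k\to\bar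 y$, $\lambda_k\to\lambda$, $\eta_k\to0$, $\frac{x_k-\bar x}{\|x_k-\bar x\|}\to u$, $\frac{y_k-\bar y}{\|x_k-\bar x\|}\to0$, and for all $k$ and $i$: $\eta_k\in\widehat D^*\Phi(x_k,y_k)(\lambda_k)$ and $\langle\lambda,e_i\rangle\langle y_k-\bar y,e_i\rangle>0$ whenever $\langle\lambda,e_i\rangle\ne0$. Strong asymptotic regularity in direction $u$: for all $(x_k,y_k)\in\operatorname{gph}\Phi$, $x_k^*$, $\lambda_k$, $x^*$, $y^*$ with $x_k\notin\Phi^{-1}(\bar y)$, $y_k\neq\bar y$, $x_k^*\in\widehat D^*\Phi(x_k,y_k)(\lambda_k)$ and $x_k\to\bar x$, $y_k\to\bar y$, $x_k^*\to x^*$, $\frac{x_k-\bar x}{\|x_k-\bar x\|}\to u$, $\frac{y_k-\bar y}{\|x_k-\bar x\|}\to0$, $\frac{\|y_k-\bar y\|}{\|x_k-\bar x\|}\lambda_k\to y^*$, $\|\lambda_k\|\to\infty$, $\frac{y_k-\bar y}{\|y_k-\bar y\|}-\frac{\lambda_k}{\|\lambda_k\|}\to0$, one has $x^*\in\operatorname{Im}D^*\Phi((\bar x,\bar y);(u,0))$. Metric subregularity in direction $u$: there are $\varepsilon,\delta,\kappa>0$ with $\operatorname{dist}(x,\Phi^{-1}(\bar y))\le\kappa\operatorname{dist}(\bar y,\Phi(x))$ for all $x\in\bar x+\mathbb B_{\varepsilon,\delta}(u)$, $\mathbb B_{\varepsilon,\delta}(u)=\{w\mid\|\|w\|u-\|u\|w\|\le\delta\|u\|\|w\|,\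 \|w\|\le\varepsilon\}$. *)

theory Defs
  imports "HOL-Analysis.Analysis"
begin

definition gph :: "('a \<Rightarrow> 'b set) \<Rightarrow> ('a \<times> 'b) set" where
  "gph \<Phi> = {(x, y). y \<in> \<Phi> x}"

definition inv_image_sv :: "('a \<Rightarrow> 'b set) \<Rightarrow> 'b \<Rightarrow> 'a set" where
  "inv_image_sv \<Phi> y = {x. y \<in> \<Phi> x}"

definition reg_normal_cone :: "'a::euclidean_space set \<Rightarrow> 'a \<Rightarrow> 'a set" where
  "reg_normal_cone Q z = {\<eta>. z \<in> Q \<and>
     (\<forall>\<epsilon>>0. \<exists>\<delta>>0. \<forall>z'\<in>Q. norm (z' - z) < \<delta> \<longrightarrow> \<eta> \<bullet> (z' - z) \<le> \<epsilon> * norm (z' - z))}"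

definition dir_normal_cone :: "'a::euclidean_space set \<Rightarrow> 'a \<Rightarrow> 'a \<Rightarrow> 'a set" where
  "dir_normal_cone Q z w = {\<eta>. \<exists>wk tk \<eta>k.
     wk \<longlonglongrightarrow> w \<and> (\<forall>k. tk k > 0) \<and> tk \<longlonglongrightarrow> 0 \<and> \<eta>k \<longlonglongrightarrow> \<eta> \<and>
     (\<forall>k. \<eta>k k \<in> reg_normal_cone Q (z + tk k *\<^sub>R wk k))}"

definition reg_coderiv ::
  "('a::euclidean_space \<Rightarrow> 'b::euclidean_space set) \<Rightarrow> 'a \<Rightarrow> 'b \<Rightarrow> 'b \<Rightarrow> 'a set" where
  "reg_coderiv \<Phi> x y ystar = {xstar. (xstar, - ystar) \<in> reg_normal_cone (gph \<Phi>) (x, y)}"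

definition dir_coderiv ::
  "('a::euclidean_space \<Rightarrow> 'b::euclidean_space set) \<Rightarrow> 'a \<Rightarrow> 'b \<Rightarrow> 'a \<Rightarrow> 'b \<Rightarrow> 'b \<Rightarrow> 'a set" where
  "dir_coderiv \<Phi> xb yb u v ystar = {xstar. (xstar, - ystar) \<in> dir_normal_cone (gph \<Phi>) (xb, yb) (u, v)}"

definition ker_sv :: "('b \<Rightarrow> 'a::zero set) \<Rightarrow> 'b set" where
  "ker_sv \<Psi> = {y. 0 \<in> \<Psi> y}"

definition Im_sv :: "('b \<Rightarrow> 'a set) \<Rightarrow> 'a set" where
  "Im_sv \<Psi> = (\<Union>y. \<Psi> y)"

definition orthonormal_basis :: "'b::euclidean_space set \<Rightarrow> bool" where
  "orthonormal_basis E \<longleftrightarrow> finite E \<and> pairwise orthogonal E \<and> (\<forall>e\<in>E. norm e = 1) \<and> span E = UNIV"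

definition quasi_normal_dir ::
  "('a::euclidean_space \<Rightarrow> 'b::euclidean_space set) \<Rightarrow> 'a \<Rightarrow> 'b \<Rightarrow> 'a \<Rightarrow> 'b set \<Rightarrow> bool" where
  "quasi_normal_dir \<Phi> xb yb u E \<longleftrightarrow>
    \<not> (\<exists>lam. lam \<noteq> 0 \<and> lam \<in> ker_sv (dir_coderiv \<Phi> xb yb u 0) \<and>
       (\<exists>x y lk \<eta>. (\<forall>k. (x k, y k) \<in> gph \<Phi> \<and> x k \<noteq> xb) \<and>
          x \<longlonglongrightarrow> xb \<and> y \<longlonglongrightarrow> yb \<and> lk \<longlonglongrightarrow> lam \<and> \<eta> \<longlonglongrightarrow> 0 \<and>
          (\<lambda>k. (x k - xb) /\<^sub>R norm (x k - xb)) \<longlonglongrightarrow> u \<and>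
          (\<lambda>k. (y k - yb) /\<^sub>R norm (x k - xb)) \<longlonglongrightarrow> 0 \<and>
          (\<forall>k. \<eta> k \<in> reg_coderiv \<Phi> (x k) (y k) (lk k) \<and>
               (\<forall>e\<in>E. lam \<bullet> e \<noteq> 0 \<longrightarrow> (lam \<bullet> e) * ((y k - yb) \<bullet> e) > 0))))"

definition strongly_asymp_regular_dir ::
  "('a::euclidean_space \<Rightarrow> 'b::euclidean_space set) \<Rightarrow> 'a \<Rightarrow> 'b \<Rightarrow> 'a \<Rightarrow> bool" where
  "strongly_asymp_regular_dir \<Phi> xb yb u \<longleftrightarrow>
    (\<forall>x y xs lk xstar ystar.
       (\<forall>k. (x k, y k) \<in> gph \<Phi> \<and> x k \<notin> inv_image_sv \<Phi> yb \<and> y k \<noteq> yb \<and>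
            xs k \<in> reg_coderiv \<Phi> (x k) (y k) (lk k)) \<and>
       x \<longlonglongrightarrow> xb \<and> y \<longlonglongrightarrow> yb \<and> xs \<longlonglongrightarrow> xstar \<and>
       (\<lambda>k. (x k - xb) /\<^sub>R norm (x k - xb)) \<longlonglongrightarrow> u \<and>
       (\<lambda>k. (y k - yb) /\<^sub>R norm (x k - xb)) \<longlonglongrightarrow> 0 \<and>
       (\<lambda>k. (norm (y k - yb) / norm (x k - xb)) *\<^sub>R lk k) \<longlonglongrightarrow> ystar \<and>
       filterlim (\<lambda>k. norm (lk k)) at_top sequentially \<and>
       (\<lambda>k. (y k - yb) /\<^sub>R norm (y k - yb) - lk k /\<^sub>R norm (lk k)) \<longlonglongrightarrow> 0
     \<longrightarrow> xstar \<in> Im_sv (dir_coderiv \<Phi> xb yb u 0))"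

definition dir_nbhd :: "real \<Rightarrow> real \<Rightarrow> 'a::real_normed_vector \<Rightarrow> 'a set" where
  "dir_nbhd \<epsilon> \<delta> u = {w. norm (norm w *\<^sub>R u - norm u *\<^sub>R w) \<le> \<delta> * norm u * norm w \<and> norm w \<le> \<epsilon>}"

text \<open>Directional metric subregularity; dist(yb, empty set) = +infinity, so points with
  empty image impose no constraint.\<close>
definition metric_subregular_dir ::
  "('a::euclidean_space \<Rightarrow> 'b::euclidean_space set) \<Rightarrow> 'a \<Rightarrow> 'b \<Rightarrow> 'a \<Rightarrow> bool" where
  "metric_subregular_dir \<Phi> xb yb u \<longleftrightarrow>
    (\<exists>\<epsilon>>0. \<exists>\<delta>>0. \<exists>\<kappa>>0. \<forall>x. x \<in> (\<lambda>w. xb + w) ` dir_nbhd \<epsilon> \<delta> u \<longrightarrow> \<Phi> x \<noteq> {} \<longrightarrow>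
        infdist x (inv_image_sv \<Phi> yb) \<le> \<kappa> * infdist yb (\<Phi> x))"

end

theory Submission
  imports Defs "HOL-Real_Asymp.Real_Asymp"
begin

text \<open>
  Both properties are proved by contradiction, and in both cases a failure produces points
  (x k, y k) of the graph converging to (xb, yb) tangentially to (u, 0), with y k \<noteq> yb,
  together with regular normals (\<eta> k, - l k) to the graph such that \<eta> k tends to 0 and
  l k is asymptotically the unit vector in the direction of y k - yb. A cluster point lam
  of the l k is a nonzero element of the kernel of the directional limiting coderivative,
  and along a subsequence each nonzero coordinate of lam in E has the sign of the
  corresponding coordinate of y k - yb: exactly the configuration excluded by
  quasi-normality.

  For strong asymptotic regularity the defining sequences themselves, with the multipliers
  normalised, form such a configuration, so the premise of that implication never holds.
  For metric subregularity, a point x near xb in direction u at which subregularity fails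
  with modulus n^2 is replaced by a minimiser of norm (y' - yb) + \<beta> * norm (x' - x)^2 over
  the graph. With d the distance from x to the solution set and \<beta> = n^2 * dist(yb, \<Phi> x) / d^2,
  the minimiser stays within d / n of x, hence off the solution set, and the gradient of
  the objective there is the required regular normal.
\<close>

section \<open>Regular normals\<close>

lemma reg_normal_coneI_quadratic:
  assumes "z \<in> Q" "C \<ge> 0" "\<And>z'. z' \<in> Q \<Longrightarrow> v \<bullet> (z' - z) \<le> C * (norm (z' - z))\<^sup>2"
  shows "v \<in> reg_normal_cone Q z"
  unfolding reg_normal_cone_def
proof (intro CollectI conjI allI impI)
  fix \<epsilon> :: real assume "\<epsilon> > 0"
  show "\<exists>\<delta>>0. \<forall>z'\<in>Q. norm (z' - z) < \<delta> \<longrightarrow> v \<bullet> (z' - z) \<le> \<epsilon> * norm (z' - z)"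
  proof (intro exI[of _ "\<epsilon> / (C + 1)"] conjI ballI impI)
    show "\<epsilon> / (C + 1) > 0" using \<open>\<epsilon> > 0\<close> \<open>C \<ge> 0\<close> by simp
    fix z' assume "z' \<in> Q" and small: "norm (z' - z) < \<epsilon> / (C + 1)"
    have "C * norm (z' - z) \<le> (C + 1) * norm (z' - z)" by (simp add: distrib_right)
    also have "\<dots> \<le> \<epsilon>" using small \<open>C \<ge> 0\<close> by (simp add: field_simps)
    finally have "C * norm (z' - z) \<le> \<epsilon>" .
    then have "C * (norm (z' - z))\<^sup>2 \<le> \<epsilon> * norm (z' - z)"
      by (simp add: power2_eq_square mult_right_mono flip: mult.assoc)
    then show "v \<bullet> (z' - z) \<le> \<epsilon> * norm (z' - z)"
      using assms(3)[OF \<open>z' \<in> Q\<close>] by linarith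
  qed
qed (fact assms(1))

lemma reg_normal_cone_scaleR:
  assumes "v \<in> reg_normal_cone Q z" "c \<ge> 0"
  shows "c *\<^sub>R v \<in> reg_normal_cone Q z"
  unfolding reg_normal_cone_def
proof (intro CollectI conjI allI impI)
  show "z \<in> Q" using assms(1) by (simp add: reg_normal_cone_def)
  fix \<epsilon> :: real assume "\<epsilon> > 0"
  then have "\<epsilon> / (c + 1) > 0" using \<open>c \<ge> 0\<close> by simp
  then obtain \<delta> where "\<delta> > 0"
    and \<delta>: "\<forall>z'\<in>Q. norm (z' - z) < \<delta> \<longrightarrow> v \<bullet> (z' - z) \<le> \<epsilon> / (c + 1) * norm (z' - z)"
    using assms(1) unfolding reg_normal_cone_def by blast
  have c_scaled: "c * (\<epsilon> / (c + 1)) \<le> \<epsilon>"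
    using \<open>c \<ge> 0\<close> \<open>\<epsilon> > 0\<close> by (simp add: field_simps)
  show "\<exists>\<delta>>0. \<forall>z'\<in>Q. norm (z' - z) < \<delta> \<longrightarrow> (c *\<^sub>R v) \<bullet> (z' - z) \<le> \<epsilon> * norm (z' - z)"
  proof (intro exI[of _ \<delta>] conjI ballI impI)
    fix z' assume "z' \<in> Q" "norm (z' - z) < \<delta>"
    then have "c * (v \<bullet> (z' - z)) \<le> c * (\<epsilon> / (c + 1) * norm (z' - z))"
      using \<delta> \<open>c \<ge> 0\<close> by (blast intro: mult_left_mono)
    also have "\<dots> \<le> \<epsilon> * norm (z' - z)"
      using mult_right_mono[OF c_scaled norm_ge_zero] by (simp only: mult.assoc)
    finally show "(c *\<^sub>R v) \<bullet> (z' - z) \<le> \<epsilon> * norm (z' - z)" by simp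
  qed (fact \<open>\<delta> > 0\<close>)
qed

lemma reg_coderiv_imp_gph: "\<xi> \<in> reg_coderiv \<Phi> x y l \<Longrightarrow> (x, y) \<in> gph \<Phi>"
  by (simp add: reg_coderiv_def reg_normal_cone_def)

lemma LIMSEQ_norm_bound:
  fixes f :: "nat \<Rightarrow> 'a::real_normed_vector"
  assumes "\<And>k. norm (f k - L) \<le> g k" "g \<longlonglongrightarrow> 0"
  shows "f \<longlonglongrightarrow> L"
  using Lim_null_comparison[of "\<lambda>k. f k - L" g] assms by (simp add: LIM_zero_cancel)

section \<open>Sequences violating quasi-normality\<close>

lemma eventually_sign_agreement:
  fixes q :: "nat \<Rightarrow> 'b::real_inner"
  assumes "finite E" "q \<longlonglongrightarrow> lam"
  shows "\<forall>\<^sub>F k in sequentially. \<forall>e\<in>E. lam \<bullet> e \<noteq> 0 \<longrightarrow> (lam \<bullet> e) * (q k \<bullet> e) > 0"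
proof -
  have "\<forall>\<^sub>F k in sequentially. lam \<bullet> e \<noteq> 0 \<longrightarrow> (lam \<bullet> e) * (q k \<bullet> e) > 0" for e
  proof (cases "lam \<bullet> e = 0")
    case False
    have "(\<lambda>k. (lam \<bullet> e) * (q k \<bullet> e)) \<longlonglongrightarrow> (lam \<bullet> e) * (lam \<bullet> e)"
      by (intro tendsto_mult tendsto_inner tendsto_const assms(2))
    moreover have "(lam \<bullet> e) * (lam \<bullet> e) > 0"
      using False by (simp add: not_square_less_zero less_le)
    ultimately have "\<forall>\<^sub>F k in sequentially. (lam \<bullet> e) * (q k \<bullet> e) > 0"
      by (rule order_tendstoD(1))
    then show ?thesis
      by (rule eventually_mono) simp
  qed simp
  then show ?thesis
    by (intro eventually_ball_finite[OF assms(1)] ballI)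
qed

lemma ker_dir_coderivI:
  assumes x_ne: "\<And>k. x k \<noteq> xb"
    and coderiv: "\<And>k. \<eta> k \<in> reg_coderiv \<Phi> (x k) (y k) (l k)"
    and "x \<longlonglongrightarrow> xb" "\<eta> \<longlonglongrightarrow> 0" "l \<longlonglongrightarrow> lam"
    and "(\<lambda>k. (x k - xb) /\<^sub>R norm (x k - xb)) \<longlonglongrightarrow> u"
    and "(\<lambda>k. (y k - yb) /\<^sub>R norm (x k - xb)) \<longlonglongrightarrow> 0"
  shows "lam \<in> ker_sv (dir_coderiv \<Phi> xb yb u 0)"
proof -
  define t where "t k = norm (x k - xb)" for k
  define w where "w k = ((x k - xb) /\<^sub>R t k, (y k - yb) /\<^sub>R t k)" for k
  have t_pos: "t k > 0" for k
    using x_ne unfolding t_def by simp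
  have "t \<longlonglongrightarrow> norm (xb - xb)"
    unfolding t_def by (intro tendsto_intros assms)
  moreover have "w \<longlonglongrightarrow> (u, 0)"
    unfolding w_def t_def by (intro tendsto_Pair assms)
  moreover have "(\<lambda>k. (\<eta> k, - l k)) \<longlonglongrightarrow> (0, - lam)"
    by (intro tendsto_intros assms)
  moreover have "(\<eta> k, - l k) \<in> reg_normal_cone (gph \<Phi>) ((xb, yb) + t k *\<^sub>R w k)" for k
    using coderiv[of k] t_pos[of k] by (simp add: w_def reg_coderiv_def)
  ultimately have "(0, - lam) \<in> dir_normal_cone (gph \<Phi>) (xb, yb) (u, 0)"
    unfolding dir_normal_cone_def using t_pos by auto
  then show ?thesis
    by (simp add: ker_sv_def dir_coderiv_def)
qed

lemma exists_subseq_sign_agreement: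
  fixes z :: "nat \<Rightarrow> 'b::euclidean_space"
  assumes "finite E" "\<And>k. z k \<noteq> 0"
  obtains lam s where "norm lam = 1" "strict_mono s" "(\<lambda>k. z (s k) /\<^sub>R norm (z (s k))) \<longlonglongrightarrow> lam"
    "\<And>k e. e \<in> E \<Longrightarrow> lam \<bullet> e \<noteq> 0 \<Longrightarrow> (lam \<bullet> e) * (z (s k) \<bullet> e) > 0"
proof -
  define q where "q k = z k /\<^sub>R norm (z k)" for k
  obtain lam r where "lam \<in> sphere 0 1" "strict_mono r" and q_r: "(q \<circ> r) \<longlonglongrightarrow> lam"
    using seq_compactE[OF compact_imp_seq_compact[OF compact_sphere], of q 0 1] assms(2)
    by (auto simp: q_def)
  obtain N where N: "\<And>k. k \<ge> N \<Longrightarrow> \<forall>e\<in>E. lam \<bullet> e \<noteq> 0 \<longrightarrow> (lam \<bullet> e) * (q (r k) \<bullet> e) > 0"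
    using eventually_sign_agreement[OF \<open>finite E\<close> q_r] by (auto simp: eventually_sequentially)
  show thesis
  proof (rule that[of lam "\<lambda>k. r (k + N)"])
    show "norm lam = 1"
      using \<open>lam \<in> sphere 0 1\<close> by simp
    show "strict_mono (\<lambda>k. r (k + N))"
      using \<open>strict_mono r\<close> by (simp add: strict_mono_def)
    show "(\<lambda>k. z (r (k + N)) /\<^sub>R norm (z (r (k + N)))) \<longlonglongrightarrow> lam"
      using LIMSEQ_ignore_initial_segment[OF q_r, of N] by (simp add: q_def)
    fix k e assume "e \<in> E" "lam \<bullet> e \<noteq> 0"
    have "(lam \<bullet> e) * (z (r (k + N)) \<bullet> e) = norm (z (r (k + N))) * ((lam \<bullet> e) * (q (r (k + N)) \<bullet> e))"
      using assms(2) by (simp add: q_def)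
    also have "\<dots> > 0"
      using N[of "k + N"] \<open>e \<in> E\<close> \<open>lam \<bullet> e \<noteq> 0\<close> assms(2) by simp
    finally show "(lam \<bullet> e) * (z (r (k + N)) \<bullet> e) > 0" .
  qed
qed

lemma LIMSEQ_if_ratio_LIMSEQ_0:
  fixes x :: "nat \<Rightarrow> 'a::real_normed_vector" and y :: "nat \<Rightarrow> 'b::real_normed_vector"
  assumes "x \<longlonglongrightarrow> xb" "\<And>k. x k \<noteq> xb" "(\<lambda>k. (y k - yb) /\<^sub>R norm (x k - xb)) \<longlonglongrightarrow> 0"
  shows "y \<longlonglongrightarrow> yb"
proof -
  have "(\<lambda>k. norm (x k - xb) *\<^sub>R ((y k - yb) /\<^sub>R norm (x k - xb))) \<longlonglongrightarrow> norm (xb - xb) *\<^sub>R 0"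
    by (intro tendsto_intros assms(1,3))
  then show ?thesis
    using assms(2) by (simp add: LIM_zero_iff)
qed

lemma not_quasi_normal_dirI:
  fixes \<Phi> :: "'a::euclidean_space \<Rightarrow> 'b::euclidean_space set"
  assumes "finite E"
    and x_ne: "\<And>k. x k \<noteq> xb" and y_ne: "\<And>k. y k \<noteq> yb"
    and coderiv: "\<And>k. \<eta> k \<in> reg_coderiv \<Phi> (x k) (y k) (l k)"
    and x_lim: "x \<longlonglongrightarrow> xb" and \<eta>_lim: "\<eta> \<longlonglongrightarrow> 0"
    and dir_lim: "(\<lambda>k. (x k - xb) /\<^sub>R norm (x k - xb)) \<longlonglongrightarrow> u"
    and ratio_lim: "(\<lambda>k. (y k - yb) /\<^sub>R norm (x k - xb)) \<longlonglongrightarrow> 0"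
    and aligned: "(\<lambda>k. (y k - yb) /\<^sub>R norm (y k - yb) - l k) \<longlonglongrightarrow> 0"
  shows "\<not> quasi_normal_dir \<Phi> xb yb u E"
proof -
  obtain lam s where "norm lam = 1" "strict_mono s"
    and dir_y_s: "(\<lambda>k. (y (s k) - yb) /\<^sub>R norm (y (s k) - yb)) \<longlonglongrightarrow> lam"
    and sign: "\<And>k e. e \<in> E \<Longrightarrow> lam \<bullet> e \<noteq> 0 \<Longrightarrow> (lam \<bullet> e) * ((y (s k) - yb) \<bullet> e) > 0"
    using exists_subseq_sign_agreement[OF \<open>finite E\<close>, of "\<lambda>k. y k - yb"] y_ne by auto
  have lim_s: "(f \<circ> s) \<longlonglongrightarrow> a" if "f \<longlonglongrightarrow> a" for f :: "nat \<Rightarrow> 'c::topological_space" and a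
    using LIMSEQ_subseq_LIMSEQ[OF that \<open>strict_mono s\<close>] .
  have "(\<lambda>k. (y (s k) - yb) /\<^sub>R norm (y (s k) - yb)
      - ((y (s k) - yb) /\<^sub>R norm (y (s k) - yb) - l (s k))) \<longlonglongrightarrow> lam - 0"
    using dir_y_s lim_s[OF aligned] by (intro tendsto_diff) (simp_all add: o_def)
  then have l_s: "(l \<circ> s) \<longlonglongrightarrow> lam"
    by (simp add: o_def)
  have y_lim: "y \<longlonglongrightarrow> yb"
    using x_lim x_ne ratio_lim by (rule LIMSEQ_if_ratio_LIMSEQ_0)
  have dir_s: "(\<lambda>k. ((x \<circ> s) k - xb) /\<^sub>R norm ((x \<circ> s) k - xb)) \<longlonglongrightarrow> u"
    using lim_s[OF dir_lim] by (simp add: o_def)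
  have ratio_s: "(\<lambda>k. ((y \<circ> s) k - yb) /\<^sub>R norm ((x \<circ> s) k - xb)) \<longlonglongrightarrow> 0"
    using lim_s[OF ratio_lim] by (simp add: o_def)
  have ker: "lam \<in> ker_sv (dir_coderiv \<Phi> xb yb u 0)"
    by (rule ker_dir_coderivI[where x = "x \<circ> s" and y = "y \<circ> s" and \<eta> = "\<eta> \<circ> s" and l = "l \<circ> s"])
      (use x_ne coderiv l_s lim_s[OF x_lim] lim_s[OF \<eta>_lim] dir_s ratio_s in simp_all)
  have "lam \<noteq> 0"
    using \<open>norm lam = 1\<close> by auto
  show ?thesis
    unfolding quasi_normal_dir_def not_not
  proof (intro exI conjI)
    show "\<forall>k. ((x \<circ> s) k, (y \<circ> s) k) \<in> gph \<Phi> \<and> (x \<circ> s) k \<noteq> xb"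
      using x_ne reg_coderiv_imp_gph[OF coderiv] by simp
    show "\<forall>k. (\<eta> \<circ> s) k \<in> reg_coderiv \<Phi> ((x \<circ> s) k) ((y \<circ> s) k) ((l \<circ> s) k) \<and>
        (\<forall>e\<in>E. lam \<bullet> e \<noteq> 0 \<longrightarrow> (lam \<bullet> e) * (((y \<circ> s) k - yb) \<bullet> e) > 0)"
      using coderiv sign by simp
  qed (fact \<open>lam \<noteq> 0\<close> ker l_s lim_s[OF x_lim] lim_s[OF y_lim] lim_s[OF \<eta>_lim] dir_s ratio_s)+
qed

theorem strongly_asymp_regular_dir_if_quasi_normal_dir:
  fixes \<Phi> :: "'a::euclidean_space \<Rightarrow> 'b::euclidean_space set"
  assumes "(xb, yb) \<in> gph \<Phi>" "finite E" "quasi_normal_dir \<Phi> xb yb u E"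
  shows "strongly_asymp_regular_dir \<Phi> xb yb u"
  unfolding strongly_asymp_regular_dir_def
proof (intro allI impI)
  fix x y xs lk xstar ystar
  assume H: "(\<forall>k. (x k, y k) \<in> gph \<Phi> \<and> x k \<notin> inv_image_sv \<Phi> yb \<and> y k \<noteq> yb \<and>
            xs k \<in> reg_coderiv \<Phi> (x k) (y k) (lk k)) \<and>
       x \<longlonglongrightarrow> xb \<and> y \<longlonglongrightarrow> yb \<and> xs \<longlonglongrightarrow> xstar \<and>
       (\<lambda>k. (x k - xb) /\<^sub>R norm (x k - xb)) \<longlonglongrightarrow> u \<and>
       (\<lambda>k. (y k - yb) /\<^sub>R norm (x k - xb)) \<longlonglongrightarrow> 0 \<and>
       (\<lambda>k. (norm (y k - yb) / norm (x k - xb)) *\<^sub>R lk k) \<longlonglongrightarrow> ystar \<and>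
       filterlim (\<lambda>k. norm (lk k)) at_top sequentially \<and>
       (\<lambda>k. (y k - yb) /\<^sub>R norm (y k - yb) - lk k /\<^sub>R norm (lk k)) \<longlonglongrightarrow> 0"
  have "x k \<noteq> xb" for k
    using H assms(1) by (auto simp: gph_def inv_image_sv_def)
  moreover have "xs k /\<^sub>R norm (lk k) \<in> reg_coderiv \<Phi> (x k) (y k) (lk k /\<^sub>R norm (lk k))" for k
    using H reg_normal_cone_scaleR[of "(xs k, - lk k)" _ _ "inverse (norm (lk k))"]
    by (simp add: reg_coderiv_def)
  moreover have "(\<lambda>k. inverse (norm (lk k)) *\<^sub>R xs k) \<longlonglongrightarrow> 0 *\<^sub>R xstar"
    using H by (intro tendsto_scaleR tendsto_inverse_0_at_top) auto
  ultimately have "\<not> quasi_normal_dir \<Phi> xb yb u E"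
    using H by (intro not_quasi_normal_dirI[OF \<open>finite E\<close>]) auto
  with assms(3) show "xstar \<in> Im_sv (dir_coderiv \<Phi> xb yb u 0)" by blast
qed

section \<open>Metric subregularity by penalisation\<close>

lemma closed_attains_inf_bounded_sublevel:
  fixes f :: "'a::heine_borel \<Rightarrow> real"
  assumes "closed Q" "q0 \<in> Q" "continuous_on UNIV f" "bounded {q \<in> Q. f q \<le> f q0}"
  obtains p where "p \<in> Q" "\<And>q. q \<in> Q \<Longrightarrow> f p \<le> f q"
proof -
  define K where "K = {q \<in> Q. f q \<le> f q0}"
  have "closed {q. f q \<le> f q0}"
    using assms(3) by (intro closed_Collect_le continuous_intros)
  then have "compact K"
    using assms(1,4) by (simp add: K_def compact_eq_bounded_closed closed_Int Collect_conj_eq)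
  moreover have "K \<noteq> {}"
    using assms(2) by (auto simp: K_def)
  ultimately obtain p where "p \<in> K" and p_min: "\<And>q. q \<in> K \<Longrightarrow> f p \<le> f q"
    using continuous_attains_inf[of K f] continuous_on_subset[OF assms(3)] by blast
  show thesis
  proof
    show "p \<in> Q" using \<open>p \<in> K\<close> by (simp add: K_def)
    show "f p \<le> f q" if "q \<in> Q" for q
      using that p_min[of q] p_min[of q0] assms(2) by (cases "f q \<le> f q0") (auto simp: K_def)
  qed
qed

lemma norm_mult_norm_minus_inner_le:
  fixes a b :: "'a::real_inner"
  shows "norm a * norm b - a \<bullet> b \<le> (norm (b - a))\<^sup>2 / 2"
proof -
  have "(norm (b - a))\<^sup>2 = (norm b)\<^sup>2 - 2 * (a \<bullet> b) + (norm a)\<^sup>2"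
    by (simp add: power2_norm_eq_inner inner_diff inner_commute)
  moreover have "0 \<le> (norm b - norm a)\<^sup>2" by simp
  ultimately show ?thesis
    by (simp add: power2_diff algebra_simps)
qed

text \<open>Since y1 \<noteq> yb, the objective is smooth near the minimiser, and its negated gradient
  is a proximal, hence regular, normal.\<close>

lemma reg_normal_cone_at_penalized_min:
  fixes Q :: "('a::euclidean_space \<times> 'b::euclidean_space) set"
  assumes "(x1, y1) \<in> Q" "y1 \<noteq> yb" "\<beta> \<ge> 0"
    and min: "\<And>x2 y2. (x2, y2) \<in> Q \<Longrightarrow>
      norm (y1 - yb) + \<beta> * (norm (x1 - x0))\<^sup>2 \<le> norm (y2 - yb) + \<beta> * (norm (x2 - x0))\<^sup>2"
  shows "(- (2 * \<beta>) *\<^sub>R (x1 - x0), - ((y1 - yb) /\<^sub>R norm (y1 - yb))) \<in> reg_normal_cone Q (x1, y1)"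
proof (rule reg_normal_coneI_quadratic[OF assms(1)])
  define a where "a = y1 - yb"
  have "norm a > 0"
    using assms(2) by (simp add: a_def)
  show "0 \<le> 1 / (2 * norm a) + \<beta>"
    using \<open>norm a > 0\<close> \<open>\<beta> \<ge> 0\<close> by simp
  fix z assume "z \<in> Q"
  then obtain x2 y2 where z: "z = (x2, y2)" and "(x2, y2) \<in> Q" by (cases z) auto
  define b hx hy where "b = y2 - yb" and "hx = x2 - x1" and "hy = y2 - y1"
  have hy: "hy = b - a" by (simp add: a_def b_def hy_def)
  have "(norm (x2 - x0))\<^sup>2 = (norm (x1 - x0))\<^sup>2 + 2 * ((x1 - x0) \<bullet> hx) + (norm hx)\<^sup>2"
    by (simp add: hx_def power2_norm_eq_inner inner_diff inner_commute algebra_simps)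
  with min[OF \<open>(x2, y2) \<in> Q\<close>]
  have x_part: "- (2 * \<beta>) * ((x1 - x0) \<bullet> hx) \<le> \<beta> * (norm hx)\<^sup>2 + norm b - norm a"
    by (simp add: a_def b_def algebra_simps)
  have "- (a /\<^sub>R norm a) \<bullet> hy = (norm a * norm a - a \<bullet> b) / norm a"
    using \<open>norm a > 0\<close>
    by (simp add: hy inner_diff_right field_simps flip: power2_norm_eq_inner power2_eq_square)
  then have y_part: "- (a /\<^sub>R norm a) \<bullet> hy \<le> norm a - norm b + (norm hy)\<^sup>2 / (2 * norm a)"
    using norm_mult_norm_minus_inner_le[of a b] \<open>norm a > 0\<close>
    by (simp add: hy field_simps)
  have "(- (2 * \<beta>) *\<^sub>R (x1 - x0), - ((y1 - yb) /\<^sub>R norm (y1 - yb))) \<bullet> (z - (x1, y1))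
      = - (2 * \<beta>) * ((x1 - x0) \<bullet> hx) + - (a /\<^sub>R norm a) \<bullet> hy"
    by (simp add: z a_def hx_def hy_def)
  also have "\<dots> \<le> \<beta> * (norm hx)\<^sup>2 + (norm hy)\<^sup>2 / (2 * norm a)"
    using x_part y_part by simp
  also have "\<dots> \<le> (1 / (2 * norm a) + \<beta>) * ((norm hx)\<^sup>2 + (norm hy)\<^sup>2)"
    using \<open>norm a > 0\<close> \<open>\<beta> \<ge> 0\<close> by (simp add: algebra_simps)
  also have "\<dots> = (1 / (2 * norm a) + \<beta>) * (norm (z - (x1, y1)))\<^sup>2"
    by (simp add: z hx_def hy_def norm_Pair)
  finally show "(- (2 * \<beta>) *\<^sub>R (x1 - x0), - ((y1 - yb) /\<^sub>R norm (y1 - yb))) \<bullet> (z - (x1, y1))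
      \<le> (1 / (2 * norm a) + \<beta>) * (norm (z - (x1, y1)))\<^sup>2" .
qed

lemma exists_penalized_min:
  fixes Q :: "('a::euclidean_space \<times> 'b::euclidean_space) set"
  assumes "closed Q" "(x0, y0) \<in> Q" "\<beta> > 0"
  obtains x1 y1 where "(x1, y1) \<in> Q"
    and "\<And>x2 y2. (x2, y2) \<in> Q \<Longrightarrow>
      norm (y1 - yb) + \<beta> * (norm (x1 - x0))\<^sup>2 \<le> norm (y2 - yb) + \<beta> * (norm (x2 - x0))\<^sup>2"
proof -
  define f where "f p = norm (snd p - yb) + \<beta> * (norm (fst p - x0))\<^sup>2" for p :: "'a \<times> 'b"
  define \<nu> where "\<nu> = norm (y0 - yb)"
  have "{p \<in> Q. f p \<le> f (x0, y0)} \<subseteq> cball x0 (sqrt (\<nu> / \<beta>)) \<times> cball yb \<nu>"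
  proof
    fix p assume "p \<in> {p \<in> Q. f p \<le> f (x0, y0)}"
    then obtain a b where p: "p = (a, b)" and sum: "norm (b - yb) + \<beta> * (norm (a - x0))\<^sup>2 \<le> \<nu>"
      by (cases p) (auto simp: f_def \<nu>_def)
    then have "\<beta> * (norm (a - x0))\<^sup>2 \<le> \<nu>"
      using norm_ge_zero[of "b - yb"] by linarith
    then have "(norm (a - x0))\<^sup>2 \<le> \<nu> / \<beta>"
      using \<open>\<beta> > 0\<close> by (simp add: le_divide_eq mult.commute)
    moreover have "\<beta> * (norm (a - x0))\<^sup>2 \<ge> 0"
      using \<open>\<beta> > 0\<close> by simp
    with sum have "norm (b - yb) \<le> \<nu>"
      by linarith
    ultimately show "p \<in> cball x0 (sqrt (\<nu> / \<beta>)) \<times> cball yb \<nu>"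
      by (simp add: p dist_norm norm_minus_commute real_le_rsqrt)
  qed
  then have "bounded {p \<in> Q. f p \<le> f (x0, y0)}"
    by (rule bounded_subset[rotated]) (intro bounded_Times bounded_cball)
  moreover have "continuous_on UNIV f"
    unfolding f_def by (intro continuous_intros)
  ultimately obtain p where "p \<in> Q" and p_min: "\<And>q. q \<in> Q \<Longrightarrow> f p \<le> f q"
    using closed_attains_inf_bounded_sublevel[OF \<open>closed Q\<close> \<open>(x0, y0) \<in> Q\<close>] by blast
  show thesis
  proof (rule that[of "fst p" "snd p"])
    show "(fst p, snd p) \<in> Q"
      using \<open>p \<in> Q\<close> by simp
    show "norm (snd p - yb) + \<beta> * (norm (fst p - x0))\<^sup>2 \<le> norm (y2 - yb) + \<beta> * (norm (x2 - x0))\<^sup>2"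
      if "(x2, y2) \<in> Q" for x2 y2
      using p_min[OF that] by (simp add: f_def)
  qed
qed

lemma exists_penalized_min_off_level_set:
  fixes \<Phi> :: "'a::euclidean_space \<Rightarrow> 'b::euclidean_space set"
    and x :: 'a and y0 yb :: 'b and n :: real
  defines "d \<equiv> infdist x (inv_image_sv \<Phi> yb)"
    and "\<beta> \<equiv> n\<^sup>2 * norm (y0 - yb) / (infdist x (inv_image_sv \<Phi> yb))\<^sup>2"
  assumes "closed (gph \<Phi>)" and "n > 1" and "y0 \<in> \<Phi> x"
    and gap: "n\<^sup>2 * norm (y0 - yb) < d"
  obtains x1 y1 where "(x1, y1) \<in> gph \<Phi>" "y1 \<noteq> yb" "norm (x1 - x) \<le> d / n"
    "n\<^sup>2 * norm (y1 - yb) < d"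
    and "\<And>x2 y2. (x2, y2) \<in> gph \<Phi> \<Longrightarrow>
      norm (y1 - yb) + \<beta> * (norm (x1 - x))\<^sup>2 \<le> norm (y2 - yb) + \<beta> * (norm (x2 - x))\<^sup>2"
proof -
  define \<nu> where "\<nu> = norm (y0 - yb)"
  have "0 \<le> n\<^sup>2 * norm (y0 - yb)"
    by simp
  with gap have "d > 0"
    by linarith
  have not_in_S: "d \<le> norm (x' - x)" if "yb \<in> \<Phi> x'" for x'
    using infdist_le[of x' "inv_image_sv \<Phi> yb" x] that
    by (simp add: d_def inv_image_sv_def dist_norm norm_minus_commute)
  have "y0 \<noteq> yb"
    using not_in_S[of x] \<open>y0 \<in> \<Phi> x\<close> \<open>d > 0\<close> by auto
  then have "\<beta> > 0"
    using \<open>n > 1\<close> \<open>d > 0\<close> by (simp add: \<beta>_def flip: d_def)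
  have "(x, y0) \<in> gph \<Phi>"
    using \<open>y0 \<in> \<Phi> x\<close> by (simp add: gph_def)
  then obtain x1 y1 where "(x1, y1) \<in> gph \<Phi>" and min: "\<And>x2 y2. (x2, y2) \<in> gph \<Phi> \<Longrightarrow>
      norm (y1 - yb) + \<beta> * (norm (x1 - x))\<^sup>2 \<le> norm (y2 - yb) + \<beta> * (norm (x2 - x))\<^sup>2"
    using exists_penalized_min[OF \<open>closed (gph \<Phi>)\<close> _ \<open>\<beta> > 0\<close>] by blast
  from min[OF \<open>(x, y0) \<in> gph \<Phi>\<close>]
  have min_value: "norm (y1 - yb) + \<beta> * (norm (x1 - x))\<^sup>2 \<le> \<nu>"
    by (simp add: \<nu>_def)
  have "\<beta> * (norm (x1 - x))\<^sup>2 \<ge> 0"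
    using \<open>\<beta> > 0\<close> by simp
  with min_value have "n\<^sup>2 * norm (y1 - yb) < d"
    using mult_left_mono[of "norm (y1 - yb)" \<nu> "n\<^sup>2"] gap by (simp add: \<nu>_def)
  have close: "norm (x1 - x) \<le> d / n"
  proof (rule power2_le_imp_le)
    have "\<beta> * (norm (x1 - x))\<^sup>2 \<le> \<nu>"
      using min_value norm_ge_zero[of "y1 - yb"] by linarith
    then have "(norm (x1 - x))\<^sup>2 \<le> \<nu> / \<beta>"
      using \<open>\<beta> > 0\<close> by (simp add: le_divide_eq mult.commute)
    also have "\<nu> / \<beta> = (d / n)\<^sup>2"
      using \<open>y0 \<noteq> yb\<close> \<open>n > 1\<close> \<open>d > 0\<close> by (simp add: \<beta>_def \<nu>_def power_divide flip: d_def)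
    finally show "(norm (x1 - x))\<^sup>2 \<le> (d / n)\<^sup>2" .
  qed (use \<open>n > 1\<close> \<open>d > 0\<close> in simp)
  also have "d / n < d"
    using \<open>n > 1\<close> \<open>d > 0\<close> by (simp add: divide_less_eq)
  finally have "y1 \<noteq> yb"
    using not_in_S[of x1] \<open>(x1, y1) \<in> gph \<Phi>\<close> by (auto simp: gph_def)
  show thesis
    by (rule that) (fact \<open>(x1, y1) \<in> gph \<Phi>\<close> \<open>y1 \<noteq> yb\<close> close \<open>n\<^sup>2 * norm (y1 - yb) < d\<close> min)+
qed

lemma exists_normal_near_subregularity_gap:
  fixes \<Phi> :: "'a::euclidean_space \<Rightarrow> 'b::euclidean_space set"
    and x :: 'a and yb :: 'b and n :: real
  defines "d \<equiv> infdist x (inv_image_sv \<Phi> yb)"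
  assumes "closed (gph \<Phi>)" and "n > 1" and "\<Phi> x \<noteq> {}"
    and gap: "n\<^sup>2 * infdist yb (\<Phi> x) < d"
  obtains x1 y1 \<eta> where "y1 \<noteq> yb" "\<eta> \<in> reg_coderiv \<Phi> x1 y1 ((y1 - yb) /\<^sub>R norm (y1 - yb))"
    "norm \<eta> \<le> 2 / n" "norm (x1 - x) \<le> d / n" "n\<^sup>2 * norm (y1 - yb) < d"
proof -
  have "\<Phi> x = Pair x -` gph \<Phi>"
    by (auto simp: gph_def)
  then have "closed (\<Phi> x)"
    using \<open>closed (gph \<Phi>)\<close> by (simp add: continuous_closed_vimage)
  then obtain y0 where "y0 \<in> \<Phi> x" and "infdist yb (\<Phi> x) = dist yb y0"
    using \<open>\<Phi> x \<noteq> {}\<close> by (rule infdist_attains_inf)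
  with gap have gap0: "n\<^sup>2 * norm (y0 - yb) < d"
    by (simp add: dist_norm norm_minus_commute)
  moreover have "0 \<le> n\<^sup>2 * norm (y0 - yb)"
    by simp
  ultimately have "d > 0"
    by linarith
  define \<beta> where "\<beta> = n\<^sup>2 * norm (y0 - yb) / d\<^sup>2"
  obtain x1 y1 where "(x1, y1) \<in> gph \<Phi>" "y1 \<noteq> yb" and close: "norm (x1 - x) \<le> d / n"
    and "n\<^sup>2 * norm (y1 - yb) < d"
    and min: "\<And>x2 y2. (x2, y2) \<in> gph \<Phi> \<Longrightarrow>
      norm (y1 - yb) + \<beta> * (norm (x1 - x))\<^sup>2 \<le> norm (y2 - yb) + \<beta> * (norm (x2 - x))\<^sup>2"
    using exists_penalized_min_off_level_set[OF \<open>closed (gph \<Phi>)\<close> \<open>n > 1\<close> \<open>y0 \<in> \<Phi> x\<close>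
        gap0[unfolded d_def]]
    unfolding \<beta>_def d_def by blast
  have "\<beta> \<ge> 0"
    by (simp add: \<beta>_def)
  define \<eta> where "\<eta> = - (2 * \<beta>) *\<^sub>R (x1 - x)"
  have "\<eta> \<in> reg_coderiv \<Phi> x1 y1 ((y1 - yb) /\<^sub>R norm (y1 - yb))"
    using reg_normal_cone_at_penalized_min[OF \<open>(x1, y1) \<in> gph \<Phi>\<close> \<open>y1 \<noteq> yb\<close> \<open>\<beta> \<ge> 0\<close> min]
    by (simp add: \<eta>_def reg_coderiv_def)
  moreover have "norm \<eta> \<le> 2 / n"
  proof -
    have "norm \<eta> = 2 * \<beta> * norm (x1 - x)"
      using \<open>\<beta> \<ge> 0\<close> by (simp add: \<eta>_def)
    also have "\<dots> \<le> 2 * \<beta> * (d / n)"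
      using close \<open>\<beta> \<ge> 0\<close> by (intro mult_left_mono) auto
    also have "\<dots> = 2 * (n\<^sup>2 * norm (y0 - yb) / d) / n"
      using \<open>n > 1\<close> by (simp add: \<beta>_def power2_eq_square)
    also have "\<dots> \<le> 2 * 1 / n"
      using gap0 \<open>n > 1\<close> \<open>d > 0\<close>
      by (intro divide_right_mono mult_left_mono) (simp_all add: divide_le_eq_1)
    finally show ?thesis
      by simp
  qed
  ultimately show thesis
    using that \<open>y1 \<noteq> yb\<close> close \<open>n\<^sup>2 * norm (y1 - yb) < d\<close> by blast
qed

lemma norm_direction_perturbation:
  fixes u v w :: "'a::real_normed_vector"
  assumes "norm u = 1" "w \<noteq> 0"
    and w_dir: "norm (norm w *\<^sub>R u - w) \<le> \<delta> * norm w"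
    and v_close: "norm (v - w) \<le> \<rho> * norm w" and "\<rho> \<le> 1 / 2"
  shows "norm w / 2 \<le> norm v" "norm v \<le> 2 * norm w"
    and "norm (v /\<^sub>R norm v - u) \<le> 2 * (\<delta> + 2 * \<rho>)"
proof -
  have "\<rho> * norm w \<le> norm w / 2"
    using \<open>\<rho> \<le> 1 / 2\<close> mult_right_mono[of \<rho> "1 / 2" "norm w"] by simp
  moreover have "norm w \<le> norm v + norm (v - w)" "norm v \<le> norm w + norm (v - w)"
    using norm_triangle_ineq4[of v "v - w"] norm_triangle_ineq[of w "v - w"] by simp_all
  ultimately show v_large: "norm w / 2 \<le> norm v" and "norm v \<le> 2 * norm w"
    using v_close by linarith+
  have "v - norm v *\<^sub>R u = (v - w) - (norm w *\<^sub>R u - w) + (norm w - norm v) *\<^sub>R u"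
    by (simp add: algebra_simps)
  also have "norm \<dots> \<le> norm ((v - w) - (norm w *\<^sub>R u - w)) + norm ((norm w - norm v) *\<^sub>R u)"
    by (rule norm_triangle_ineq)
  also have "\<dots> \<le> norm (v - w) + norm (norm w *\<^sub>R u - w) + \<bar>norm w - norm v\<bar>"
    using norm_triangle_ineq4[of "v - w" "norm w *\<^sub>R u - w"] \<open>norm u = 1\<close> by simp
  also have "\<dots> \<le> (\<delta> + 2 * \<rho>) * norm w"
    using w_dir v_close norm_triangle_ineq3[of w v] by (simp add: norm_minus_commute algebra_simps)
  finally have num: "norm (v - norm v *\<^sub>R u) \<le> (\<delta> + 2 * \<rho>) * norm w" .
  have "norm w > 0"
    using \<open>w \<noteq> 0\<close> by simp
  with v_large have "norm v > 0"
    by linarith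
  then have "v /\<^sub>R norm v - u = (1 / norm v) *\<^sub>R (v - norm v *\<^sub>R u)"
    by (simp add: algebra_simps divide_inverse)
  then have "norm (v /\<^sub>R norm v - u) = norm (v - norm v *\<^sub>R u) / norm v"
    by simp
  also have "\<dots> \<le> (\<delta> + 2 * \<rho>) * norm w / (norm w / 2)"
    using num v_large \<open>norm w > 0\<close> norm_ge_zero[of "v - norm v *\<^sub>R u"]
    by (intro frac_le) linarith+
  also have "\<dots> = 2 * (\<delta> + 2 * \<rho>)"
    using \<open>w \<noteq> 0\<close> by simp
  finally show "norm (v /\<^sub>R norm v - u) \<le> 2 * (\<delta> + 2 * \<rho>)" .
qed

lemma exists_normal_at_scale:
  fixes \<Phi> :: "'a::euclidean_space \<Rightarrow> 'b::euclidean_space set" and n :: real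
  assumes "closed (gph \<Phi>)" and "(xb, yb) \<in> gph \<Phi>" and "norm u = 1" and "n \<ge> 2"
    and w: "w \<in> dir_nbhd (1 / n\<^sup>2) (1 / n\<^sup>2) u" and "\<Phi> (xb + w) \<noteq> {}"
    and gap: "n\<^sup>2 * infdist yb (\<Phi> (xb + w)) < infdist (xb + w) (inv_image_sv \<Phi> yb)"
  shows "\<exists>x1 y1 \<eta>. x1 \<noteq> xb \<and> y1 \<noteq> yb \<and> \<eta> \<in> reg_coderiv \<Phi> x1 y1 ((y1 - yb) /\<^sub>R norm (y1 - yb)) \<and>
    norm \<eta> \<le> 6 / n \<and> norm (x1 - xb) \<le> 6 / n \<and>
    norm ((x1 - xb) /\<^sub>R norm (x1 - xb) - u) \<le> 6 / n \<and> norm ((y1 - yb) /\<^sub>R norm (x1 - xb)) \<le> 6 / n"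
proof -
  define d where "d = infdist (xb + w) (inv_image_sv \<Phi> yb)"
  have "n > 1" and "n > 0" and n_recip: "1 / n\<^sup>2 \<le> 1 / n" "1 / n \<le> 1 / 2"
    using \<open>n \<ge> 2\<close> by (simp_all add: power2_eq_square field_simps)
  obtain x1 y1 \<eta> where "y1 \<noteq> yb" and \<eta>: "\<eta> \<in> reg_coderiv \<Phi> x1 y1 ((y1 - yb) /\<^sub>R norm (y1 - yb))"
    and "norm \<eta> \<le> 2 / n" and close: "norm (x1 - (xb + w)) \<le> d / n"
    and small: "n\<^sup>2 * norm (y1 - yb) < d"
    using exists_normal_near_subregularity_gap[OF \<open>closed (gph \<Phi>)\<close> \<open>n > 1\<close> \<open>\<Phi> (xb + w) \<noteq> {}\<close>
        gap, folded d_def] by blast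
  have "xb \<in> inv_image_sv \<Phi> yb"
    using \<open>(xb, yb) \<in> gph \<Phi>\<close> by (simp add: gph_def inv_image_sv_def)
  then have "d \<le> norm w"
    using infdist_le[of xb _ "xb + w"] by (simp add: d_def dist_norm)
  have "0 \<le> n\<^sup>2 * norm (y1 - yb)"
    by simp
  with small \<open>d \<le> norm w\<close> have "norm w > 0"
    by linarith
  then have "w \<noteq> 0"
    by auto
  have w_dir: "norm (norm w *\<^sub>R u - w) \<le> 1 / n\<^sup>2 * norm w" and "norm w \<le> 1 / n\<^sup>2"
    using w \<open>norm u = 1\<close> by (simp_all add: dir_nbhd_def)
  have "norm ((x1 - xb) - w) \<le> d / n"
    using close by (simp add: algebra_simps)
  also have "\<dots> \<le> 1 / n * norm w"
    using \<open>d \<le> norm w\<close> \<open>n > 0\<close> by (simp add: divide_right_mono)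
  finally have "norm ((x1 - xb) - w) \<le> 1 / n * norm w" .
  note perturbation = norm_direction_perturbation[OF \<open>norm u = 1\<close> \<open>w \<noteq> 0\<close> w_dir this n_recip(2)]
  have "norm (x1 - xb) > 0"
    using perturbation(1) \<open>norm w > 0\<close> by linarith
  moreover have "n\<^sup>2 * norm (y1 - yb) \<le> 2 * norm (x1 - xb)"
    using small \<open>d \<le> norm w\<close> perturbation(1) by linarith
  ultimately have "norm (y1 - yb) / norm (x1 - xb) \<le> 2 / n\<^sup>2"
    using \<open>n > 0\<close> by (simp add: divide_le_eq le_divide_eq mult.commute)
  then have "norm ((y1 - yb) /\<^sub>R norm (x1 - xb)) \<le> 2 / n\<^sup>2"
    by (simp add: divide_inverse_commute)
  have scale: "6 / n = 6 * (1 / n)" "2 / n\<^sup>2 = 2 * (1 / n\<^sup>2)" "2 / n = 2 * (1 / n)" "1 / n > 0"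
    using \<open>n > 0\<close> by simp_all
  show ?thesis
  proof (intro exI conjI)
    show "x1 \<noteq> xb"
      using \<open>norm (x1 - xb) > 0\<close> by auto
    show "norm \<eta> \<le> 6 / n"
      using \<open>norm \<eta> \<le> 2 / n\<close> scale by linarith
    show "norm (x1 - xb) \<le> 6 / n"
      using perturbation(2) \<open>norm w \<le> 1 / n\<^sup>2\<close> n_recip scale by linarith
    show "norm ((x1 - xb) /\<^sub>R norm (x1 - xb) - u) \<le> 6 / n"
      using perturbation(3) n_recip(1) by (simp add: algebra_simps)
    show "norm ((y1 - yb) /\<^sub>R norm (x1 - xb)) \<le> 6 / n"
      using \<open>norm ((y1 - yb) /\<^sub>R norm (x1 - xb)) \<le> 2 / n\<^sup>2\<close> n_recip scale by linarith
  qed (fact \<eta> \<open>y1 \<noteq> yb\<close>)+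
qed

lemma not_metric_subregular_dirD:
  assumes "\<not> metric_subregular_dir \<Phi> xb yb u" "c > 0"
  shows "\<exists>w. w \<in> dir_nbhd (1 / c) (1 / c) u \<and> \<Phi> (xb + w) \<noteq> {} \<and>
    c * infdist yb (\<Phi> (xb + w)) < infdist (xb + w) (inv_image_sv \<Phi> yb)"
proof (rule ccontr)
  assume "\<not> ?thesis"
  then have "\<forall>x. x \<in> (\<lambda>w. xb + w) ` dir_nbhd (1 / c) (1 / c) u \<longrightarrow> \<Phi> x \<noteq> {} \<longrightarrow>
      infdist x (inv_image_sv \<Phi> yb) \<le> c * infdist yb (\<Phi> x)"
    by (auto simp: not_less)
  moreover have "1 / c > 0"
    using \<open>c > 0\<close> by simp
  ultimately have "metric_subregular_dir \<Phi> xb yb u"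
    unfolding metric_subregular_dir_def using \<open>c > 0\<close> by blast
  with assms(1) show False ..
qed

theorem metric_subregular_dir_if_quasi_normal_dir:
  fixes \<Phi> :: "'a::euclidean_space \<Rightarrow> 'b::euclidean_space set"
  assumes "closed (gph \<Phi>)" and "(xb, yb) \<in> gph \<Phi>" and "norm u = 1"
    and "finite E" and "quasi_normal_dir \<Phi> xb yb u E"
  shows "metric_subregular_dir \<Phi> xb yb u"
proof (rule ccontr)
  assume "\<not> metric_subregular_dir \<Phi> xb yb u"
  define n where "n k = real k + 2" for k
  have n_ge: "n k \<ge> 2" and n_sq_pos: "(n k)\<^sup>2 > 0" for k
    by (simp_all add: n_def)
  obtain W where W_nbhd: "\<And>k. W k \<in> dir_nbhd (1 / (n k)\<^sup>2) (1 / (n k)\<^sup>2) u"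
    and W_ne: "\<And>k. \<Phi> (xb + W k) \<noteq> {}"
    and W_gap: "\<And>k. (n k)\<^sup>2 * infdist yb (\<Phi> (xb + W k)) < infdist (xb + W k) (inv_image_sv \<Phi> yb)"
    using not_metric_subregular_dirD[OF \<open>\<not> metric_subregular_dir \<Phi> xb yb u\<close> n_sq_pos] by metis
  obtain x y \<eta> where bounds: "\<And>k. x k \<noteq> xb \<and> y k \<noteq> yb \<and>
      \<eta> k \<in> reg_coderiv \<Phi> (x k) (y k) ((y k - yb) /\<^sub>R norm (y k - yb)) \<and>
      norm (\<eta> k) \<le> 6 / n k \<and> norm (x k - xb) \<le> 6 / n k \<and>
      norm ((x k - xb) /\<^sub>R norm (x k - xb) - u) \<le> 6 / n k \<and>
      norm ((y k - yb) /\<^sub>R norm (x k - xb)) \<le> 6 / n k"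
    using exists_normal_at_scale[OF assms(1-3) n_ge W_nbhd W_ne W_gap] by metis
  have bound_lim: "(\<lambda>k. 6 / n k) \<longlonglongrightarrow> 0"
    unfolding n_def by real_asymp
  have "\<not> quasi_normal_dir \<Phi> xb yb u E"
  proof (rule not_quasi_normal_dirI[OF \<open>finite E\<close>, where l = "\<lambda>k. (y k - yb) /\<^sub>R norm (y k - yb)"])
    show "x \<longlonglongrightarrow> xb" "\<eta> \<longlonglongrightarrow> 0"
      "(\<lambda>k. (x k - xb) /\<^sub>R norm (x k - xb)) \<longlonglongrightarrow> u"
      "(\<lambda>k. (y k - yb) /\<^sub>R norm (x k - xb)) \<longlonglongrightarrow> 0"
      by (rule LIMSEQ_norm_bound[OF _ bound_lim], use bounds in simp)+
  qed (use bounds in simp_all)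
  with \<open>quasi_normal_dir \<Phi> xb yb u E\<close> show False
    by contradiction
qed

theorem theorem5p12:
  fixes \<Phi> :: "'a::euclidean_space \<Rightarrow> 'b::euclidean_space set"
    and xb :: 'a and yb :: 'b and u :: 'a and E :: "'b set"
  assumes "closed (gph \<Phi>)"
    and "(xb, yb) \<in> gph \<Phi>"
    and "norm u = 1"
    and "orthonormal_basis E"
    and "quasi_normal_dir \<Phi> xb yb u E"
  shows "strongly_asymp_regular_dir \<Phi> xb yb u \<and> metric_subregular_dir \<Phi> xb yb u"
proof -
  have "finite E"
    using \<open>orthonormal_basis E\<close> by (simp add: orthonormal_basis_def)
  with assms show ?thesis
    using strongly_asymp_regular_dir_if_quasi_normal_dir metric_subregular_dir_if_quasi_normal_dir
    by blast
qed

end
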